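(* Let $f,g\in R(x)$ and $h=f+g$. Suppose $val(f)=val(g)$ and that there exists $u\in\mathbb{R}^n$ such that for all sufficiently small $\epsilon>0$ we have $val(f(p^{\epsilon u}x))< val(g(p^{\epsilon u}x))$. Then $val(h)=val(f)$ and $lc(h)=lc(f)+lc(g)$.
   Context: Let $F=F(x)$, $x=(x_1,\dots,x_n)$, be the field consisting of $0$ and all formal series $f=\sum_{t\in T} a_t(x) p^t$, where $T\subset\mathbb{R}$ is discrete and bounded from below, the $a_t(x)$ are rational functions of $x$ independent of $p$, and $a_{\min T}\neq 0$; $val(f)=\min T$ and $lc(f)=a_{val(f)}$. For $\epsilon\in\mathbb{R}^n$, $p^{\epsilon}x=(p^{\epsilon_1}x_1,\dots,p^{\epsilon_n}x_n)$. For $r\in\mathbb{C}(x)$, $\deg_\epsilon(r)=val(r(p^\epsilon x))$ and $\deg(r)=-\inf_{\epsilon\ne0}\deg_\epsilon(r)/\|\epsilon\|_\infty$. $R(x)\subset F(x)$ is the subfield of those $f=\sum_t a_tp^t$ with $\inf_{t\in T,\,t>val(f)}\deg(a_t)/(t-val(f))<\infty$; for such $f$ and $\epsilon$ small, $f(p^\epsilon x)$ is the series obtained by substituting $p^\epsilon x$ into each coefficient, expanding in $p$ and summing. *)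

theory Defs
  imports Complex_Main "HOL-Library.Poly_Mapping" "HOL-Library.Extended_Real"
    "HOL-Computational_Algebra.Fraction_Field"
begin

text \<open>Variables x_i are indexed by a finite (linearly ordered) type 'n, so x = (x_i)_{i :: 'n},
  i.e. n = CARD('n).\<close>

type_synonym 'n mpoly = "('n \<Rightarrow>\<^sub>0 nat) \<Rightarrow>\<^sub>0 complex"
type_synonym 'n ratfun = "'n mpoly fract"

text \<open>Formal series sum_t a_t p^t with coefficients in C(x), represented by the coefficient
  function t \<mapsto> a_t (zero outside the support T).\<close>

type_synonym 'n pser = "real \<Rightarrow> 'n ratfun"

definition is_pser :: "'n::{finite,linorder} pser \<Rightarrow> bool" where
  "is_pser S \<longleftrightarrow> (\<forall>c. finite {t. S t \<noteq> 0 \<and> t \<le> c})"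

definition val :: "'n::{finite,linorder} pser \<Rightarrow> ereal" where
  "val S = (INF t\<in>{t. S t \<noteq> 0}. ereal t)"

definition lc :: "'n::{finite,linorder} pser \<Rightarrow> 'n ratfun" where
  "lc S = S (real_of_ereal (val S))"

text \<open>Multiplication of series (Cauchy product; the sums are finite for series)\<close>
definition pser_mult :: "'n::{finite,linorder} pser \<Rightarrow> 'n pser \<Rightarrow> 'n pser" where
  "pser_mult A B = (\<lambda>s. \<Sum>t\<in>{t. A t \<noteq> 0 \<and> B (s - t) \<noteq> 0}. A t * B (s - t))"

text \<open>P(p^eps x) for a polynomial P = sum_a c_a x^a: the series sum_a c_a x^a p^(eps . a)\<close>
definition dotp :: "('n::finite \<Rightarrow> real) \<Rightarrow> ('n \<Rightarrow>\<^sub>0 nat) \<Rightarrow> real" where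
  "dotp eps a = (\<Sum>i\<in>UNIV. eps i * real (Poly_Mapping.lookup a i))"

definition poly_subst :: "('n::{finite,linorder} \<Rightarrow> real) \<Rightarrow> 'n mpoly \<Rightarrow> 'n pser" where
  "poly_subst eps P = (\<lambda>s. Fract (\<Sum>a\<in>{a\<in>Poly_Mapping.keys P. dotp eps a = s}. Poly_Mapping.single a (Poly_Mapping.lookup P a)) 1)"

text \<open>r(p^eps x) for a rational function r = P/Q: the (unique) series S with
  S * Q(p^eps x) = P(p^eps x), i.e. the expansion of P(p^eps x)/Q(p^eps x) in p.\<close>
definition rat_subst :: "('n::{finite,linorder} \<Rightarrow> real) \<Rightarrow> 'n ratfun \<Rightarrow> 'n pser" where
  "rat_subst eps r = (THE S. is_pser S \<and>
     (\<forall>P Q. Q \<noteq> 0 \<longrightarrow> r = Fract P Q \<longrightarrow> pser_mult S (poly_subst eps Q) = poly_subst eps P))"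

text \<open>f(p^eps x) for a series f = sum_t a_t p^t: substitute into each coefficient, expand in p
  and sum (coefficientwise; the sums are finite for f in R(x) and eps small)\<close>
definition pser_subst :: "('n::{finite,linorder} \<Rightarrow> real) \<Rightarrow> 'n pser \<Rightarrow> 'n pser" where
  "pser_subst eps f = (\<lambda>s. \<Sum>t\<in>{t. f t \<noteq> 0 \<and> rat_subst eps (f t) (s - t) \<noteq> 0}.
      rat_subst eps (f t) (s - t))"

definition deg_eps :: "('n::{finite,linorder} \<Rightarrow> real) \<Rightarrow> 'n ratfun \<Rightarrow> ereal" where
  "deg_eps eps r = val (rat_subst eps r)"

definition norm_inf :: "('n::finite \<Rightarrow> real) \<Rightarrow> real" where
  "norm_inf eps = Max (range (\<lambda>i. \<bar>eps i\<bar>))"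

definition rdeg :: "'n::{finite,linorder} ratfun \<Rightarrow> real" where
  "rdeg r = - Inf ((\<lambda>eps. real_of_ereal (deg_eps eps r) / norm_inf eps) ` {eps. \<exists>i. eps i \<noteq> 0})"

text \<open>The subfield R(x): series of F(x) whose coefficients have at most linearly growing degree\<close>
definition in_R :: "'n::{finite,linorder} pser \<Rightarrow> bool" where
  "in_R f \<longleftrightarrow> is_pser f \<and>
     (SUP t\<in>{t. f t \<noteq> 0 \<and> ereal t > val f}. ereal (rdeg (f t) / (t - real_of_ereal (val f)))) < \<infinity>"

end

theory Submission
  imports Defs
begin

text \<open>Let m = val f = val g. If lc f + lc g \<noteq> 0 the claim is immediate, so suppose lc g = - lc f
  and write lc f = P/Q. Since f lies in R(x), the degrees of its higher coefficients a_t grow at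
  most linearly in t - m, and its support is discrete; hence for small e > 0 the term lc(f) p^m
  dominates f(p^{e u} x), and val f(p^{e u} x) = m + e (w_u(P) - w_u(Q)), where w_u(P) is the
  least u-weight of a monomial of P. The same formula holds for g with -P in place of P, so the
  two valuations coincide for all small e, contradicting the hypothesis.\<close>

definition pser_one :: "'n::{finite,linorder} pser" where
  "pser_one = (\<lambda>s. if s = 0 then 1 else 0)"

lemma val_le: "A t \<noteq> 0 \<Longrightarrow> val A \<le> ereal t"
  unfolding val_def by (rule INF_lower) auto

lemma coeff_less_val: "val A = ereal m \<Longrightarrow> t < m \<Longrightarrow> A t = 0"
  using val_le[of A t] by (cases "A t = 0") auto

lemma val_eqI:
  assumes "A m \<noteq> 0" "\<And>t. t < m \<Longrightarrow> A t = 0"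
  shows "val A = ereal m"
proof (rule antisym)
  show "val A \<le> ereal m" using assms(1) by (rule val_le)
  show "ereal m \<le> val A"
    unfolding val_def using assms(2) by (intro INF_greatest) (auto simp: not_less[symmetric])
qed

lemma val_eq_top_iff: "val A = \<infinity> \<longleftrightarrow> (\<forall>t. A t = 0)"
proof
  assume "val A = \<infinity>"
  show "\<forall>t. A t = 0"
  proof (rule allI, rule ccontr)
    fix t assume "A t \<noteq> 0"
    then have "val A \<le> ereal t" by (rule val_le)
    with \<open>val A = \<infinity>\<close> show False by simp
  qed
next
  assume "\<forall>t. A t = 0"
  then show "val A = \<infinity>" unfolding val_def by (simp add: top_ereal_def)
qed

lemma pser_least_exponent:
  assumes "is_pser A" "A t0 \<noteq> 0"
  obtains m where "A m \<noteq> 0" "\<And>t. A t \<noteq> 0 \<Longrightarrow> m \<le> t"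
proof -
  let ?F = "{t. A t \<noteq> 0 \<and> t \<le> t0}"
  have fin: "finite ?F" using assms(1) unfolding is_pser_def by blast
  have "Min ?F \<in> ?F" using fin assms(2) by (intro Min_in) auto
  moreover have "Min ?F \<le> t" if "A t \<noteq> 0" for t
    using that fin \<open>Min ?F \<in> ?F\<close> by (cases "t \<le> t0") (auto intro: Min_le)
  ultimately show thesis by (intro that[of "Min ?F"]) auto
qed

lemma pser_bounded_below: "is_pser A \<Longrightarrow> \<exists>a. \<forall>t. A t \<noteq> 0 \<longrightarrow> a \<le> t"
proof (cases "\<exists>t0. A t0 \<noteq> 0")
  case True
  assume "is_pser A"
  with True obtain m where "\<And>t. A t \<noteq> 0 \<Longrightarrow> m \<le> t" by (metis pser_least_exponent)
  then show ?thesis by blast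
qed blast

lemma val_pser_eq_ereal:
  assumes "is_pser A" "A t0 \<noteq> 0"
  obtains m where "val A = ereal m" "A m \<noteq> 0"
proof -
  obtain m where "A m \<noteq> 0" "\<And>t. A t \<noteq> 0 \<Longrightarrow> m \<le> t"
    using pser_least_exponent[OF assms] by blast
  then show thesis using that[of m] val_eqI[of A m] by force
qed

lemma coeff_val_nonzero: "is_pser A \<Longrightarrow> val A = ereal m \<Longrightarrow> A m \<noteq> 0"
proof -
  assume "is_pser A" "val A = ereal m"
  then have "\<not> (\<forall>t. A t = 0)" using val_eq_top_iff[of A] by auto
  then obtain t0 where "A t0 \<noteq> 0" by blast
  then show "A m \<noteq> 0" using val_pser_eq_ereal \<open>is_pser A\<close> \<open>val A = ereal m\<close> by (metis ereal.inject)
qed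

lemma pser_gap_above:
  assumes "is_pser A"
  obtains \<delta> where "0 < \<delta>" "\<And>t. A t \<noteq> 0 \<Longrightarrow> m < t \<Longrightarrow> m + \<delta> \<le> t"
proof -
  define F where "F = {t. A t \<noteq> 0 \<and> t \<le> m + 1 \<and> m < t}"
  have "F \<subseteq> {t. A t \<noteq> 0 \<and> t \<le> m + 1}" unfolding F_def by blast
  then have "finite F" using assms unfolding is_pser_def by (blast intro: finite_subset)
  define \<delta> where "\<delta> = Min (insert 1 ((\<lambda>t. t - m) ` F))"
  have "0 < \<delta>" unfolding \<delta>_def using \<open>finite F\<close> by (subst Min_gr_iff) (auto simp: F_def)
  moreover have "m + \<delta> \<le> t" if "A t \<noteq> 0" "m < t" for t
  proof -
    have "\<delta> \<le> 1" "t \<in> F \<Longrightarrow> \<delta> \<le> t - m"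
      unfolding \<delta>_def using \<open>finite F\<close> by (auto intro: Min_le)
    then show ?thesis using that unfolding F_def by (cases "t \<le> m + 1") auto
  qed
  ultimately show thesis by (rule that)
qed

lemma is_pser_finite_support: "finite {t. A t \<noteq> 0} \<Longrightarrow> is_pser A"
  unfolding is_pser_def by (auto elim: finite_subset[rotated])

lemma is_pser_one: "is_pser pser_one"
  by (rule is_pser_finite_support) (simp add: pser_one_def)

lemma is_pser_add: "is_pser A \<Longrightarrow> is_pser B \<Longrightarrow> is_pser (\<lambda>t. A t + B t)"
  unfolding is_pser_def
  by (rule allI, rule finite_subset[of _ "{t. A t \<noteq> 0 \<and> t \<le> _} \<union> {t. B t \<noteq> 0 \<and> t \<le> _}"]) auto

lemma is_pser_diff: "is_pser A \<Longrightarrow> is_pser B \<Longrightarrow> is_pser (\<lambda>t. A t - B t)"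
  unfolding is_pser_def
  by (rule allI, rule finite_subset[of _ "{t. A t \<noteq> 0 \<and> t \<le> _} \<union> {t. B t \<noteq> 0 \<and> t \<le> _}"]) auto

lemma is_pser_zero: "is_pser (\<lambda>t. 0)"
  unfolding is_pser_def by simp

lemma is_pser_shift:
  assumes "is_pser A"
  shows "is_pser (\<lambda>t. x * A (t + a))"
  unfolding is_pser_def
proof
  fix c
  have "{t. x * A (t + a) \<noteq> 0 \<and> t \<le> c} \<subseteq> (\<lambda>t. t - a) ` {t. A t \<noteq> 0 \<and> t \<le> c + a}"
    by (auto intro!: image_eqI[of _ _ "_ + a"])
  moreover have "finite {t. A t \<noteq> 0 \<and> t \<le> c + a}" using assms unfolding is_pser_def by blast
  ultimately show "finite {t. x * A (t + a) \<noteq> 0 \<and> t \<le> c}" by (auto elim: finite_subset)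
qed

lemma pser_mult_nonzeroD: "pser_mult A B s \<noteq> 0 \<Longrightarrow> \<exists>t. A t \<noteq> 0 \<and> B (s - t) \<noteq> 0"
proof (rule ccontr)
  assume "pser_mult A B s \<noteq> 0" "\<nexists>t. A t \<noteq> 0 \<and> B (s - t) \<noteq> 0"
  then have "{t. A t \<noteq> 0 \<and> B (s - t) \<noteq> 0} = {}" by blast
  with \<open>pser_mult A B s \<noteq> 0\<close> show False unfolding pser_mult_def by simp
qed

lemma pser_mult_eq_sum:
  assumes "finite F" "{t. A t \<noteq> 0 \<and> B (s - t) \<noteq> 0} \<subseteq> F"
  shows "pser_mult A B s = (\<Sum>t\<in>F. A t * B (s - t))"
  unfolding pser_mult_def using assms by (intro sum.mono_neutral_left) auto

lemma pser_mult_nonzero_ge: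
  "(\<forall>t. A t \<noteq> 0 \<longrightarrow> a \<le> t) \<Longrightarrow> (\<forall>t. B t \<noteq> 0 \<longrightarrow> b \<le> t) \<Longrightarrow> pser_mult A B s \<noteq> 0 \<Longrightarrow> a + b \<le> s"
  by (drule pser_mult_nonzeroD) force

lemma finite_pser_mult_support:
  assumes "is_pser A" "is_pser B"
  shows "finite {t. A t \<noteq> 0 \<and> B (s - t) \<noteq> 0}"
proof -
  obtain b where b: "\<forall>t. B t \<noteq> 0 \<longrightarrow> b \<le> t" using pser_bounded_below assms(2) by blast
  have "{t. A t \<noteq> 0 \<and> B (s - t) \<noteq> 0} \<subseteq> {t. A t \<noteq> 0 \<and> t \<le> s - b}"
    using b by force
  moreover have "finite {t. A t \<noteq> 0 \<and> t \<le> s - b}" using assms(1) unfolding is_pser_def by blast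
  ultimately show ?thesis by (rule finite_subset)
qed

lemma is_pser_mult:
  assumes "is_pser A" "is_pser B"
  shows "is_pser (pser_mult A B)"
  unfolding is_pser_def
proof
  fix c
  obtain a where a: "\<forall>t. A t \<noteq> 0 \<longrightarrow> a \<le> t" using pser_bounded_below assms(1) by blast
  obtain b where b: "\<forall>t. B t \<noteq> 0 \<longrightarrow> b \<le> t" using pser_bounded_below assms(2) by blast
  let ?K = "{t. A t \<noteq> 0 \<and> t \<le> c - b} \<times> {r. B r \<noteq> 0 \<and> r \<le> c - a}"
  have "{s. pser_mult A B s \<noteq> 0 \<and> s \<le> c} \<subseteq> (\<lambda>(t,r). t + r) ` ?K"
  proof
    fix s assume "s \<in> {s. pser_mult A B s \<noteq> 0 \<and> s \<le> c}"
    then have s: "pser_mult A B s \<noteq> 0" "s \<le> c" by auto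
    then obtain t where t: "A t \<noteq> 0" "B (s - t) \<noteq> 0" using pser_mult_nonzeroD by blast
    then have "a \<le> t" "b \<le> s - t" using a b by auto
    then show "s \<in> (\<lambda>(t,r). t + r) ` ?K"
      using t s by (intro image_eqI[of _ _ "(t, s - t)"]) auto
  qed
  moreover have "finite ?K" using assms unfolding is_pser_def by blast
  ultimately show "finite {s. pser_mult A B s \<noteq> 0 \<and> s \<le> c}"
    by (auto elim: finite_subset)
qed

lemma pser_mult_commute: "pser_mult A B = pser_mult B A"
proof
  fix s
  show "pser_mult A B s = pser_mult B A s"
    unfolding pser_mult_def
    by (rule sum.reindex_bij_witness[of _ "\<lambda>t. s - t" "\<lambda>t. s - t"]) (auto simp: mult.commute)
qed

lemma pser_mult_one: "pser_mult A pser_one = A"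
proof
  fix s
  have "pser_mult A pser_one s = (\<Sum>t\<in>{s}. A t * pser_one (s - t))"
    by (rule pser_mult_eq_sum) (auto simp: pser_one_def)
  then show "pser_mult A pser_one s = A s" by (simp add: pser_one_def)
qed

lemma pser_mult_zero_left: "pser_mult (\<lambda>t. 0) B = (\<lambda>t. 0)"
  unfolding pser_mult_def by simp

lemma pser_mult_add_left:
  assumes "is_pser A" "is_pser B" "is_pser C"
  shows "pser_mult (\<lambda>t. A t + B t) C = (\<lambda>s. pser_mult A C s + pser_mult B C s)"
proof
  fix s
  let ?F = "{t. A t \<noteq> 0 \<and> C (s - t) \<noteq> 0} \<union> {t. B t \<noteq> 0 \<and> C (s - t) \<noteq> 0}"
  have fin: "finite ?F" using finite_pser_mult_support assms by blast
  have "pser_mult (\<lambda>t. A t + B t) C s = (\<Sum>t\<in>?F. (A t + B t) * C (s - t))"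
    using fin by (intro pser_mult_eq_sum) auto
  also have "\<dots> = (\<Sum>t\<in>?F. A t * C (s - t)) + (\<Sum>t\<in>?F. B t * C (s - t))"
    by (simp add: distrib_right sum.distrib)
  also have "\<dots> = pser_mult A C s + pser_mult B C s"
    using pser_mult_eq_sum[OF fin, of A C] pser_mult_eq_sum[OF fin, of B C] by auto
  finally show "pser_mult (\<lambda>t. A t + B t) C s = pser_mult A C s + pser_mult B C s" .
qed

lemma pser_mult_uminus_left: "pser_mult (\<lambda>t. - A t) C = (\<lambda>s. - pser_mult A C s)"
  unfolding pser_mult_def by (simp add: sum_negf)

lemma pser_mult_diff_left:
  assumes "is_pser A" "is_pser B" "is_pser C"
  shows "pser_mult (\<lambda>t. A t - B t) C = (\<lambda>s. pser_mult A C s - pser_mult B C s)"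
proof -
  have "is_pser (\<lambda>t. - B t)" using is_pser_diff[OF is_pser_zero assms(2)] by simp
  then show ?thesis
    using pser_mult_add_left[OF assms(1) _ assms(3), of "\<lambda>t. - B t"]
    by (simp add: pser_mult_uminus_left)
qed

text \<open>By commutativity, both sides of associativity reduce to this double sum.\<close>

lemma pser_mult_mult_eq_double_sum:
  assumes A: "is_pser A" and C: "is_pser C"
    and a: "\<forall>t. A t \<noteq> 0 \<longrightarrow> a \<le> t" and b: "\<forall>t. B t \<noteq> 0 \<longrightarrow> b \<le> t" and c: "\<forall>t. C t \<noteq> 0 \<longrightarrow> c \<le> t"
  shows "pser_mult (pser_mult A B) C s =
    (\<Sum>x\<in>{t. A t \<noteq> 0 \<and> t + b + c \<le> s}. \<Sum>z\<in>{t. C t \<noteq> 0 \<and> t + a + b \<le> s}. A x * B (s - x - z) * C z)"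
proof -
  define FA where "FA = {t. A t \<noteq> 0 \<and> t + b + c \<le> s}"
  define FC where "FC = {t. C t \<noteq> 0 \<and> t + a + b \<le> s}"
  have fA: "finite FA" using A unfolding is_pser_def FA_def
    by (rule allE[of _ "s - b - c"], elim finite_subset[rotated]) auto
  have fC: "finite FC" using C unfolding is_pser_def FC_def
    by (rule allE[of _ "s - a - b"], elim finite_subset[rotated]) auto
  have "pser_mult (pser_mult A B) C s = (\<Sum>u\<in>(\<lambda>z. s - z) ` FC. pser_mult A B u * C (s - u))"
  proof (rule pser_mult_eq_sum)
    show "{t. pser_mult A B t \<noteq> 0 \<and> C (s - t) \<noteq> 0} \<subseteq> (\<lambda>z. s - z) ` FC"
      using pser_mult_nonzero_ge[OF a b] unfolding FC_def
      by (force intro!: image_eqI[of _ _ "s - _"])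
  qed (use fC in simp)
  also have "\<dots> = (\<Sum>z\<in>FC. pser_mult A B (s - z) * C z)"
    by (subst sum.reindex) (auto simp: inj_on_def)
  also have "\<dots> = (\<Sum>z\<in>FC. \<Sum>x\<in>FA. A x * B (s - z - x) * C z)"
  proof (rule sum.cong[OF refl])
    fix z assume "z \<in> FC"
    then have "c \<le> z" using c unfolding FC_def by auto
    have "pser_mult A B (s - z) = (\<Sum>x\<in>FA. A x * B (s - z - x))"
      using b \<open>c \<le> z\<close> by (intro pser_mult_eq_sum[OF fA]) (force simp: FA_def)
    then show "pser_mult A B (s - z) * C z = (\<Sum>x\<in>FA. A x * B (s - z - x) * C z)"
      by (simp add: sum_distrib_right)
  qed
  also have "\<dots> = (\<Sum>x\<in>FA. \<Sum>z\<in>FC. A x * B (s - x - z) * C z)"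
    by (subst sum.swap) (simp add: diff_diff_eq add.commute)
  finally show ?thesis unfolding FA_def FC_def .
qed

lemma pser_mult_assoc:
  assumes A: "is_pser A" and B: "is_pser B" and C: "is_pser C"
  shows "pser_mult (pser_mult A B) C = pser_mult A (pser_mult B C)"
proof
  fix s
  obtain a where a: "\<forall>t. A t \<noteq> 0 \<longrightarrow> a \<le> t" using pser_bounded_below A by blast
  obtain b where b: "\<forall>t. B t \<noteq> 0 \<longrightarrow> b \<le> t" using pser_bounded_below B by blast
  obtain c where c: "\<forall>t. C t \<noteq> 0 \<longrightarrow> c \<le> t" using pser_bounded_below C by blast
  have "pser_mult A (pser_mult B C) s = pser_mult (pser_mult C B) A s"
    by (simp add: pser_mult_commute)
  also have "\<dots> = pser_mult (pser_mult A B) C s"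
    unfolding pser_mult_mult_eq_double_sum[OF A C a b c] pser_mult_mult_eq_double_sum[OF C A c b a]
    by (subst sum.swap) (simp add: algebra_simps)
  finally show "pser_mult (pser_mult A B) C s = pser_mult A (pser_mult B C) s" ..
qed

lemma pser_mult_least_coeff:
  assumes "\<forall>t. A t \<noteq> 0 \<longrightarrow> m \<le> t" "\<forall>t. B t \<noteq> 0 \<longrightarrow> n \<le> t"
  shows "pser_mult A B (m + n) = A m * B n" "s < m + n \<Longrightarrow> pser_mult A B s = 0"
proof -
  have "pser_mult A B (m + n) = (\<Sum>t\<in>{m}. A t * B (m + n - t))"
    using assms by (intro pser_mult_eq_sum) force+
  then show "pser_mult A B (m + n) = A m * B n" by simp
  show "s < m + n \<Longrightarrow> pser_mult A B s = 0"
    using pser_mult_nonzero_ge[OF assms] by force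
qed

lemma val_pser_mult:
  assumes "is_pser A" "is_pser B" "A t0 \<noteq> 0" "B t1 \<noteq> 0"
  shows "val (pser_mult A B) = val A + val B"
proof -
  obtain m where m: "A m \<noteq> 0" "\<And>t. A t \<noteq> 0 \<Longrightarrow> m \<le> t"
    using pser_least_exponent assms by metis
  obtain n where n: "B n \<noteq> 0" "\<And>t. B t \<noteq> 0 \<Longrightarrow> n \<le> t"
    using pser_least_exponent assms by metis
  have "val A = ereal m" "val B = ereal n" using m n by (intro val_eqI; force)+
  moreover have "val (pser_mult A B) = ereal (m + n)"
    using pser_mult_least_coeff[of A m B n] m n by (intro val_eqI) auto
  ultimately show ?thesis by simp
qed

lemma pser_mult_cancel_right:
  assumes "is_pser S1" "is_pser S2" "is_pser Q" "Q t0 \<noteq> 0"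
    and "pser_mult S1 Q = pser_mult S2 Q"
  shows "S1 = S2"
proof (rule ccontr)
  assume "S1 \<noteq> S2"
  then obtain t where t: "S1 t - S2 t \<noteq> 0" by auto
  have D: "is_pser (\<lambda>t. S1 t - S2 t)" using assms is_pser_diff by blast
  obtain m where m: "S1 m - S2 m \<noteq> 0" "\<And>t. S1 t - S2 t \<noteq> 0 \<Longrightarrow> m \<le> t"
    using pser_least_exponent[OF D t] by blast
  obtain n where n: "Q n \<noteq> 0" "\<And>t. Q t \<noteq> 0 \<Longrightarrow> n \<le> t"
    using pser_least_exponent[OF assms(3,4)] by blast
  have "pser_mult (\<lambda>t. S1 t - S2 t) Q = (\<lambda>s. 0)"
    using pser_mult_diff_left[OF assms(1-3)] assms(5) by simp
  then have "(S1 m - S2 m) * Q n = 0"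
    using pser_mult_least_coeff(1)[of "\<lambda>t. S1 t - S2 t" m Q n] m n by simp
  then show False using m n by simp
qed

lemma pser_mult_shift:
  assumes "x \<noteq> 0" "y \<noteq> 0"
  shows "pser_mult (\<lambda>t. x * A (t + a)) (\<lambda>t. y * B (t + b)) s = x * y * pser_mult A B (s + a + b)"
proof -
  have "pser_mult (\<lambda>t. x * A (t + a)) (\<lambda>t. y * B (t + b)) s =
      (\<Sum>t\<in>{t. A (t + a) \<noteq> 0 \<and> B (s - t + b) \<noteq> 0}. x * y * (A (t + a) * B (s - t + b)))"
    unfolding pser_mult_def using assms by (auto simp: algebra_simps)
  also have "\<dots> = (\<Sum>t\<in>{t. A t \<noteq> 0 \<and> B (s + a + b - t) \<noteq> 0}. x * y * (A t * B (s + a + b - t)))"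
    by (rule sum.reindex_bij_witness[of _ "\<lambda>t. t - a" "\<lambda>t. t + a"]) (auto simp: algebra_simps)
  also have "\<dots> = x * y * pser_mult A B (s + a + b)"
    unfolding pser_mult_def by (simp add: sum_distrib_left)
  finally show ?thesis .
qed

primrec pser_pow :: "'n::{finite,linorder} pser \<Rightarrow> nat \<Rightarrow> 'n pser" where
  "pser_pow W 0 = pser_one"
| "pser_pow W (Suc k) = pser_mult (pser_pow W k) W"

lemma is_pser_pow: "is_pser W \<Longrightarrow> is_pser (pser_pow W k)"
  by (induct k) (auto simp: is_pser_one is_pser_mult)

lemma is_pser_sum_pow: "is_pser W \<Longrightarrow> is_pser (\<lambda>s. \<Sum>k<N. pser_pow W k s)"
  by (induct N) (auto simp: is_pser_zero is_pser_pow intro!: is_pser_add)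

lemma pser_pow_nonzero_ge:
  assumes "\<forall>t. W t \<noteq> 0 \<longrightarrow> \<delta> \<le> t"
  shows "pser_pow W k s \<noteq> 0 \<Longrightarrow> real k * \<delta> \<le> s"
proof (induct k arbitrary: s)
  case 0 then show ?case by (simp add: pser_one_def split: if_splits)
next
  case (Suc k)
  then obtain t where t: "pser_pow W k t \<noteq> 0" "W (s - t) \<noteq> 0" using pser_mult_nonzeroD by fastforce
  then have "real k * \<delta> \<le> t" "\<delta> \<le> s - t" using Suc assms by auto
  then show ?case by (simp add: algebra_simps)
qed

lemma pser_mult_geometric_sum:
  assumes W: "is_pser W"
  shows "pser_mult (\<lambda>s. \<Sum>k<N. pser_pow W k s) (\<lambda>s. pser_one s - W s) = (\<lambda>s. pser_one s - pser_pow W N s)"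
proof (induct N)
  case 0 then show ?case by (simp add: pser_mult_zero_left)
next
  case (Suc N)
  have G: "is_pser (\<lambda>s. pser_one s - W s)" by (intro is_pser_diff is_pser_one W)
  have "pser_mult (pser_pow W N) (\<lambda>s. pser_one s - W s)
      = pser_mult (\<lambda>s. pser_one s - W s) (pser_pow W N)" by (rule pser_mult_commute)
  also have "\<dots> = (\<lambda>s. pser_pow W N s - pser_pow W (Suc N) s)"
    by (simp add: pser_mult_diff_left[OF is_pser_one W is_pser_pow[OF W]] pser_mult_commute[of pser_one]
        pser_mult_one pser_mult_commute[of W])
  finally show ?case
    by (simp add: pser_mult_add_left[OF is_pser_sum_pow[OF W] is_pser_pow[OF W] G] Suc)
qed

lemma sum_pser_pow_truncate:
  assumes "0 < \<delta>" and Wsupp: "\<forall>t. W t \<noteq> 0 \<longrightarrow> \<delta> \<le> t" and "s < real N * \<delta>"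
  shows "(\<Sum>k | real k * \<delta> \<le> s. pser_pow W k s) = (\<Sum>k<N. pser_pow W k s)"
proof (rule sum.mono_neutral_left)
  show "{k. real k * \<delta> \<le> s} \<subseteq> {..<N}"
  proof
    fix k assume "k \<in> {k. real k * \<delta> \<le> s}"
    then have "real k * \<delta> < real N * \<delta>" using assms(3) by simp
    then show "k \<in> {..<N}" using \<open>0 < \<delta>\<close> by simp
  qed
  show "\<forall>k\<in>{..<N} - {k. real k * \<delta> \<le> s}. pser_pow W k s = 0"
    using pser_pow_nonzero_ge[OF Wsupp] by force
qed simp

text \<open>The inverse of 1 - W is the geometric series; its coefficient at s is a finite sum because
  the support of W^k lies above k \<delta>.\<close>

lemma pser_one_minus_invertible:
  assumes W: "is_pser W" and "0 < \<delta>" and Wsupp: "\<forall>t. W t \<noteq> 0 \<longrightarrow> \<delta> \<le> t"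
  shows "\<exists>H. is_pser H \<and> pser_mult H (\<lambda>s. pser_one s - W s) = pser_one"
proof -
  define H where "H s = (\<Sum>k | real k * \<delta> \<le> s. pser_pow W k s)" for s
  have H_eq: "H s = (\<Sum>k<N. pser_pow W k s)" if "s < real N * \<delta>" for s N
    unfolding H_def using \<open>0 < \<delta>\<close> Wsupp that by (rule sum_pser_pow_truncate)
  have bound: "s < real (nat \<lceil>c / \<delta>\<rceil> + 1) * \<delta>" if "s \<le> c" for s c
  proof -
    have "c / \<delta> < real (nat \<lceil>c / \<delta>\<rceil> + 1)" by linarith
    then show ?thesis using that \<open>0 < \<delta>\<close> by (simp add: divide_less_eq)
  qed
  have "is_pser H"
    unfolding is_pser_def
  proof
    fix c
    define N where "N = nat \<lceil>c / \<delta>\<rceil> + 1"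
    have "{s. H s \<noteq> 0 \<and> s \<le> c} \<subseteq> {s. (\<Sum>k<N. pser_pow W k s) \<noteq> 0 \<and> s \<le> c}"
      using H_eq[OF bound[of _ c, folded N_def]] by auto
    moreover have "finite {s. (\<Sum>k<N. pser_pow W k s) \<noteq> 0 \<and> s \<le> c}"
      using is_pser_sum_pow[OF W] unfolding is_pser_def by blast
    ultimately show "finite {s. H s \<noteq> 0 \<and> s \<le> c}" by (rule finite_subset)
  qed
  moreover have "pser_mult H (\<lambda>s. pser_one s - W s) = pser_one"
  proof
    fix s
    define N where "N = nat \<lceil>s / \<delta>\<rceil> + 1"
    have "t \<le> s" if "pser_one (s - t) - W (s - t) \<noteq> 0" for t
      using that Wsupp \<open>0 < \<delta>\<close> by (force simp: pser_one_def split: if_splits)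
    then have "pser_mult H (\<lambda>s. pser_one s - W s) s
        = pser_mult (\<lambda>s. \<Sum>k<N. pser_pow W k s) (\<lambda>s. pser_one s - W s) s"
      unfolding pser_mult_def using H_eq[OF bound[of _ s, folded N_def]] by (intro sum.cong) auto
    also have "\<dots> = pser_one s - pser_pow W N s" by (simp add: pser_mult_geometric_sum[OF W])
    also have "pser_pow W N s = 0"
      using pser_pow_nonzero_ge[OF Wsupp, of N s] bound[of s s, folded N_def] by linarith
    finally show "pser_mult H (\<lambda>s. pser_one s - W s) s = pser_one s" by simp
  qed
  ultimately show ?thesis by blast
qed

lemma pser_inverse_exists:
  assumes G: "is_pser G" and "G t0 \<noteq> 0"
  shows "\<exists>H. is_pser H \<and> pser_mult H G = pser_one"
proof -
  obtain m where m: "G m \<noteq> 0" "\<And>t. G t \<noteq> 0 \<Longrightarrow> m \<le> t"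
    using pser_least_exponent[OF assms] by blast
  define c where "c = G m"
  have c: "c \<noteq> 0" using m c_def by simp
  define W where "W t = pser_one t - (1 / c) * G (t + m)" for t
  have W: "is_pser W" unfolding W_def by (intro is_pser_diff is_pser_one is_pser_shift G)
  have W_pos: "0 < t" if "W t \<noteq> 0" for t
    using that m c unfolding W_def c_def pser_one_def by (force split: if_splits)
  obtain \<delta> where "0 < \<delta>" and "\<And>t. W t \<noteq> 0 \<Longrightarrow> 0 < t \<Longrightarrow> 0 + \<delta> \<le> t"
    using pser_gap_above[OF W] by blast
  then obtain H' where H': "is_pser H'" "pser_mult H' (\<lambda>t. pser_one t - W t) = pser_one"
    using pser_one_minus_invertible[OF W, of \<delta>] W_pos by force
  have G_eq: "G = (\<lambda>t. c * (pser_one (t + - m) - W (t + - m)))"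
    unfolding W_def using c by simp
  define H where "H t = (1 / c) * H' (t + m)" for t
  have "pser_mult H G s = pser_one s" for s
    using pser_mult_shift[of "1 / c" c H' m "\<lambda>t. pser_one t - W t" "- m" s] c H'(2)
    unfolding H_def G_eq by simp
  moreover have "is_pser H" unfolding H_def by (rule is_pser_shift[OF H'(1)])
  ultimately show ?thesis by blast
qed

text \<open>weight_part eps s P is the homogeneous component of degree s of P for the grading
  deg x^a = eps \<bullet> a, so that poly_subst eps P has coefficient weight_part eps s P at p^s.\<close>

definition weight_part :: "('n::finite \<Rightarrow> real) \<Rightarrow> real \<Rightarrow> (('n \<Rightarrow>\<^sub>0 nat) \<Rightarrow>\<^sub>0 'a::comm_monoid_add) \<Rightarrow> ('n \<Rightarrow>\<^sub>0 nat) \<Rightarrow>\<^sub>0 'a" where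
  "weight_part eps s P = (\<Sum>a\<in>{a\<in>Poly_Mapping.keys P. dotp eps a = s}. Poly_Mapping.single a (Poly_Mapping.lookup P a))"

definition min_weight :: "('n::finite \<Rightarrow> real) \<Rightarrow> (('n \<Rightarrow>\<^sub>0 nat) \<Rightarrow>\<^sub>0 'a::zero) \<Rightarrow> real" where
  "min_weight eps P = Min (dotp eps ` Poly_Mapping.keys P)"

lemma poly_subst_eq_weight_part: "poly_subst eps P s = Fract (weight_part eps s P) 1"
  unfolding poly_subst_def weight_part_def by simp

lemma dotp_add: "dotp eps (a + b) = dotp eps a + dotp eps b"
  unfolding dotp_def by (simp add: lookup_add distrib_left sum.distrib)

lemma dotp_scale: "dotp (\<lambda>i. e * u i) a = e * dotp u a"
  unfolding dotp_def by (simp add: sum_distrib_left mult.assoc)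

lemma lookup_weight_part:
  "Poly_Mapping.lookup (weight_part eps s P) b = (if dotp eps b = s then Poly_Mapping.lookup P b else 0)"
proof -
  have "Poly_Mapping.lookup (weight_part eps s P) b =
     (\<Sum>a\<in>{a\<in>Poly_Mapping.keys P. dotp eps a = s}. if a = b then Poly_Mapping.lookup P a else 0)"
    unfolding weight_part_def by (simp add: lookup_sum lookup_single when_def)
  also have "\<dots> = (if dotp eps b = s then Poly_Mapping.lookup P b else 0)"
    by (simp add: sum.delta' in_keys_iff)
  finally show ?thesis .
qed

lemma weight_part_eq_0_iff: "weight_part eps s P = 0 \<longleftrightarrow> (\<forall>b\<in>Poly_Mapping.keys P. dotp eps b \<noteq> s)"
  by (auto simp: poly_mapping_eq_iff lookup_weight_part in_keys_iff fun_eq_iff)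

lemma weight_part_add: "weight_part eps s (X + Y) = weight_part eps s X + weight_part eps s Y"
  by (rule poly_mapping_eqI) (simp add: lookup_weight_part lookup_add)

lemma weight_part_sum: "weight_part eps s (sum f A) = (\<Sum>i\<in>A. weight_part eps s (f i))"
  by (induct A rule: infinite_finite_induct) (auto simp: weight_part_eq_0_iff weight_part_add)

lemma sum_weight_part: "P = (\<Sum>t\<in>dotp eps ` Poly_Mapping.keys P. weight_part eps t P)"
proof (rule poly_mapping_eqI)
  fix b
  have "Poly_Mapping.lookup (\<Sum>t\<in>dotp eps ` Poly_Mapping.keys P. weight_part eps t P) b =
     (\<Sum>t\<in>dotp eps ` Poly_Mapping.keys P. if dotp eps b = t then Poly_Mapping.lookup P b else 0)"
    by (simp add: lookup_sum lookup_weight_part)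
  also have "\<dots> = Poly_Mapping.lookup P b" by (auto simp: sum.delta in_keys_iff)
  finally show "Poly_Mapping.lookup P b = Poly_Mapping.lookup (\<Sum>t\<in>dotp eps ` Poly_Mapping.keys P. weight_part eps t P) b"
    by simp
qed

lemma keys_weight_part: "Poly_Mapping.keys (weight_part eps t P) \<subseteq> {a. dotp eps a = t}"
  by (auto simp: in_keys_iff lookup_weight_part split: if_splits)

lemma weight_part_homogeneous:
  assumes "Poly_Mapping.keys X \<subseteq> {a. dotp eps a = w}"
  shows "weight_part eps s X = (if w = s then X else 0)"
  by (rule poly_mapping_eqI) (use assms in \<open>auto simp: lookup_weight_part in_keys_iff\<close>)

lemma keys_weight_part_mult:
  "Poly_Mapping.keys (weight_part eps t P * weight_part eps r (Q :: ('n::finite \<Rightarrow>\<^sub>0 nat) \<Rightarrow>\<^sub>0 'a::comm_semiring_0))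
    \<subseteq> {a. dotp eps a = t + r}"
  using keys_mult[of "weight_part eps t P" "weight_part eps r Q"]
    keys_weight_part[of eps t P] keys_weight_part[of eps r Q]
  by (force simp: dotp_add)

lemma weight_part_mult:
  fixes P Q :: "('n::finite \<Rightarrow>\<^sub>0 nat) \<Rightarrow>\<^sub>0 'a::comm_semiring_0"
  shows "weight_part eps s (P * Q) = (\<Sum>t\<in>dotp eps ` Poly_Mapping.keys P. weight_part eps t P * weight_part eps (s - t) Q)"
proof -
  let ?TP = "dotp eps ` Poly_Mapping.keys P" and ?TQ = "dotp eps ` Poly_Mapping.keys Q"
  have "P * Q = (\<Sum>t\<in>?TP. \<Sum>r\<in>?TQ. weight_part eps t P * weight_part eps r Q)"
    by (subst sum_weight_part[of P eps], subst sum_weight_part[of Q eps]) (simp add: sum_product)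
  then have "weight_part eps s (P * Q) =
      (\<Sum>t\<in>?TP. \<Sum>r\<in>?TQ. if r = s - t then weight_part eps t P * weight_part eps r Q else 0)"
    by (simp add: weight_part_sum weight_part_homogeneous[OF keys_weight_part_mult] eq_diff_eq add.commute)
  also have "\<dots> = (\<Sum>t\<in>?TP. weight_part eps t P * weight_part eps (s - t) Q)"
  proof (intro sum.cong refl)
    have "weight_part eps r Q = 0" if "r \<notin> ?TQ" for r
      using that by (subst weight_part_eq_0_iff) auto
    then show "(\<Sum>r\<in>?TQ. if r = s - t then weight_part eps t P * weight_part eps r Q else 0)
        = weight_part eps t P * weight_part eps (s - t) Q" for t
      by (simp add: sum.delta')
  qed
  finally show ?thesis .
qed

lemma Fract_1_eq_0_iff: "Fract (x::'a::idom) 1 = 0 \<longleftrightarrow> x = 0"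
  by (simp add: Zero_fract_def eq_fract)

lemma Fract_1_sum: "Fract (sum f A) (1::'a::idom) = (\<Sum>i\<in>A. Fract (f i) 1)"
proof (induct A rule: infinite_finite_induct)
  case (insert x F)
  have "Fract (f x + sum f F) 1 = Fract (f x) 1 + Fract (sum f F) (1::'a)" by simp
  with insert show ?case by simp
qed (simp_all add: Zero_fract_def)

lemma poly_subst_nonzero_iff: "poly_subst eps P s \<noteq> 0 \<longleftrightarrow> (\<exists>b\<in>Poly_Mapping.keys P. dotp eps b = s)"
  by (simp add: poly_subst_eq_weight_part Fract_1_eq_0_iff weight_part_eq_0_iff)

lemma finite_poly_subst_support: "finite {t. poly_subst eps P t \<noteq> 0}"
  by (rule finite_subset[of _ "dotp eps ` Poly_Mapping.keys P"]) (auto simp: poly_subst_nonzero_iff)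

lemma is_pser_poly_subst: "is_pser (poly_subst eps P)"
  by (rule is_pser_finite_support[OF finite_poly_subst_support])

lemma poly_subst_nonzero:
  assumes "P \<noteq> 0" obtains t where "poly_subst eps P t \<noteq> 0"
  using assms by (metis all_not_in_conv keys_eq_empty poly_subst_nonzero_iff)

lemma val_poly_subst:
  assumes "P \<noteq> 0"
  shows "val (poly_subst eps P) = ereal (min_weight eps P)"
proof (rule val_eqI)
  have "min_weight eps P \<in> dotp eps ` Poly_Mapping.keys P"
    unfolding min_weight_def using assms by (intro Min_in) auto
  then show "poly_subst eps P (min_weight eps P) \<noteq> 0" by (auto simp: poly_subst_nonzero_iff)
next
  fix t assume t: "t < min_weight eps P"
  show "poly_subst eps P t = 0"
  proof (rule ccontr)
    assume "poly_subst eps P t \<noteq> 0"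
    then obtain b where "b \<in> Poly_Mapping.keys P" "dotp eps b = t" by (auto simp: poly_subst_nonzero_iff)
    then have "min_weight eps P \<le> t" unfolding min_weight_def by (auto intro: Min_le)
    with t show False by simp
  qed
qed

lemma poly_subst_mult: "poly_subst eps (P * Q) = pser_mult (poly_subst eps P) (poly_subst eps Q)"
proof
  fix s
  let ?TP = "dotp eps ` Poly_Mapping.keys P"
  have "pser_mult (poly_subst eps P) (poly_subst eps Q) s =
      (\<Sum>t\<in>?TP. poly_subst eps P t * poly_subst eps Q (s - t))"
    by (rule pser_mult_eq_sum) (auto simp: poly_subst_nonzero_iff)
  also have "\<dots> = poly_subst eps (P * Q) s"
    by (simp add: poly_subst_eq_weight_part weight_part_mult Fract_1_sum)
  finally show "poly_subst eps (P * Q) s = pser_mult (poly_subst eps P) (poly_subst eps Q) s" ..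
qed

lemma rat_subst_Fract:
  assumes r: "r = Fract P Q" and Q: "Q \<noteq> 0"
  shows "is_pser (rat_subst eps r)" "pser_mult (rat_subst eps r) (poly_subst eps Q) = poly_subst eps P"
proof -
  let ?Q = "poly_subst eps Q" and ?P = "poly_subst eps P"
  obtain t0 where t0: "?Q t0 \<noteq> 0" using poly_subst_nonzero[OF Q] .
  obtain H where H: "is_pser H" "pser_mult H ?Q = pser_one"
    using pser_inverse_exists[OF is_pser_poly_subst t0] by blast
  define S0 where "S0 = pser_mult ?P H"
  have S0: "is_pser S0" unfolding S0_def by (intro is_pser_mult is_pser_poly_subst H)
  have S0Q: "pser_mult S0 ?Q = ?P"
    unfolding S0_def by (simp add: pser_mult_assoc is_pser_poly_subst H pser_mult_one)
  have cancel: "S = S0" if "is_pser S" "pser_mult S ?Q = ?P" for S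
    using pser_mult_cancel_right[OF that(1) S0 is_pser_poly_subst t0] that(2) S0Q by simp
  have "pser_mult S0 (poly_subst eps Q') = poly_subst eps P'" if "Q' \<noteq> 0" "r = Fract P' Q'" for P' Q'
  proof -
    let ?X = "pser_mult S0 (poly_subst eps Q')"
    have "P' * Q = P * Q'" using r that Q by (simp add: eq_fract)
    have "pser_mult ?X ?Q = pser_mult S0 (pser_mult (poly_subst eps Q') ?Q)"
      by (simp add: pser_mult_assoc S0 is_pser_poly_subst)
    also have "\<dots> = pser_mult S0 (pser_mult ?Q (poly_subst eps Q'))"
      by (subst pser_mult_commute) (rule refl)
    also have "\<dots> = pser_mult (pser_mult S0 ?Q) (poly_subst eps Q')"
      by (simp add: pser_mult_assoc S0 is_pser_poly_subst)
    also have "\<dots> = pser_mult (poly_subst eps P') ?Q"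
      by (simp add: S0Q \<open>P' * Q = P * Q'\<close>[symmetric] flip: poly_subst_mult)
    finally show ?thesis
      using pser_mult_cancel_right[OF _ is_pser_poly_subst is_pser_poly_subst t0]
        is_pser_mult[OF S0 is_pser_poly_subst] by blast
  qed
  then have "rat_subst eps r = S0"
    unfolding rat_subst_def
  proof (intro the_equality conjI allI impI S0)
    fix S assume "is_pser S \<and> (\<forall>P Q. Q \<noteq> 0 \<longrightarrow> r = Fract P Q \<longrightarrow> pser_mult S (poly_subst eps Q) = poly_subst eps P)"
    then show "S = S0" using cancel r Q by blast
  qed
  then show "is_pser (rat_subst eps r)" "pser_mult (rat_subst eps r) ?Q = ?P" using S0 S0Q by simp_all
qed

lemma is_pser_rat_subst: "is_pser (rat_subst eps r)"
  by (cases r) (use rat_subst_Fract in blast)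

lemma val_rat_subst:
  assumes "Q \<noteq> 0" "P \<noteq> 0"
  shows "val (rat_subst eps (Fract P Q)) = ereal (min_weight eps P - min_weight eps Q)"
proof -
  let ?S = "rat_subst eps (Fract P Q)"
  note S = rat_subst_Fract[where r = "Fract P Q" and P = P and eps = eps, OF refl assms(1)]
  obtain t1 where t1: "poly_subst eps P t1 \<noteq> 0" using poly_subst_nonzero[OF assms(2)] .
  obtain t0 where t0: "poly_subst eps Q t0 \<noteq> 0" using poly_subst_nonzero[OF assms(1)] .
  obtain t2 where t2: "?S t2 \<noteq> 0"
  proof (rule ccontr)
    assume "\<not> thesis"
    then have "?S = (\<lambda>t. 0)" using that by auto
    then have "poly_subst eps P = (\<lambda>t. 0)" using S(2) by (simp add: pser_mult_zero_left)
    then show False using t1 by simp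
  qed
  obtain m where "val ?S = ereal m" using val_pser_eq_ereal[OF S(1) t2] by blast
  moreover have "val (poly_subst eps P) = val ?S + val (poly_subst eps Q)"
    using val_pser_mult[OF S(1) is_pser_poly_subst t2 t0] S(2) by simp
  ultimately show ?thesis by (simp add: val_poly_subst assms)
qed

lemma norm_inf_ge: "\<bar>eps i\<bar> \<le> norm_inf eps"
  unfolding norm_inf_def by (rule Max_ge) auto

lemma norm_inf_nonneg: "0 \<le> norm_inf eps"
  using norm_inf_ge[of eps undefined] by linarith

lemma norm_inf_pos: "eps i \<noteq> 0 \<Longrightarrow> 0 < norm_inf eps"
  using norm_inf_ge[of eps i] by linarith

lemma norm_inf_scale: "0 \<le> e \<Longrightarrow> norm_inf (\<lambda>i. e * u i) = e * norm_inf u"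
  unfolding norm_inf_def using mono_Max_commute[of "\<lambda>x. e * x" "range (\<lambda>i. \<bar>u i\<bar>)"]
  by (simp add: abs_mult image_image monoI mult_left_mono)

lemma abs_dotp_le: "\<bar>dotp eps a\<bar> \<le> norm_inf eps * (\<Sum>i\<in>UNIV. real (Poly_Mapping.lookup a i))"
proof -
  have "\<bar>dotp eps a\<bar> \<le> (\<Sum>i\<in>UNIV. \<bar>eps i\<bar> * real (Poly_Mapping.lookup a i))"
    unfolding dotp_def using sum_abs[of "\<lambda>i. eps i * real (Poly_Mapping.lookup a i)" UNIV]
    by (simp add: abs_mult)
  also have "\<dots> \<le> (\<Sum>i\<in>UNIV. norm_inf eps * real (Poly_Mapping.lookup a i))"
    by (rule sum_mono) (simp add: mult_right_mono norm_inf_ge)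
  finally show ?thesis by (simp add: sum_distrib_left)
qed

lemma abs_min_weight_le:
  assumes "P \<noteq> 0"
  obtains K where "\<And>eps. \<bar>min_weight eps P\<bar> \<le> norm_inf eps * K"
proof
  define K where "K = (\<Sum>a\<in>Poly_Mapping.keys P. \<Sum>i\<in>UNIV. real (Poly_Mapping.lookup a i))"
  fix eps
  have "min_weight eps P \<in> dotp eps ` Poly_Mapping.keys P"
    unfolding min_weight_def using assms by (intro Min_in) auto
  then obtain a where a: "a \<in> Poly_Mapping.keys P" "min_weight eps P = dotp eps a" by blast
  have "(\<Sum>i\<in>UNIV. real (Poly_Mapping.lookup a i)) \<le> K"
    unfolding K_def using a(1) by (intro member_le_sum) (auto intro: sum_nonneg)
  then show "\<bar>min_weight eps P\<bar> \<le> norm_inf eps * K"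
    using abs_dotp_le[of eps a] a(2) mult_left_mono[OF _ norm_inf_nonneg[of eps]] by fastforce
qed

text \<open>The defining infimum of deg r is over a set bounded below, since |deg_eps r| grows at most
  linearly in the sup-norm of eps.\<close>

lemma val_rat_subst_ge_rdeg:
  assumes "r \<noteq> 0"
  shows "ereal (- rdeg r * norm_inf eps) \<le> val (rat_subst eps r)"
proof -
  obtain P Q where r: "r = Fract P Q" and Q: "Q \<noteq> 0" by (cases r) auto
  have P: "P \<noteq> 0" using r assms by (auto simp: Zero_fract_def eq_fract)
  define d where "d eps' = min_weight eps' P - min_weight eps' Q" for eps'
  have val_eq: "val (rat_subst eps' r) = ereal (d eps')" for eps'
    unfolding d_def r by (rule val_rat_subst[OF Q P])
  obtain KP where KP: "\<And>eps. \<bar>min_weight eps P\<bar> \<le> norm_inf eps * KP" using abs_min_weight_le[OF P] by metis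
  obtain KQ where KQ: "\<And>eps. \<bar>min_weight eps Q\<bar> \<le> norm_inf eps * KQ" using abs_min_weight_le[OF Q] by metis
  have d_ge: "- (norm_inf eps' * (KP + KQ)) \<le> d eps'" for eps'
    using KP[of eps'] KQ[of eps'] unfolding d_def by (simp add: algebra_simps)
  show ?thesis
  proof (cases "\<exists>i. eps i \<noteq> 0")
    case True
    define S where "S = (\<lambda>eps. real_of_ereal (deg_eps eps r) / norm_inf eps) ` {eps. \<exists>i. eps i \<noteq> 0}"
    have S_eq: "S = (\<lambda>eps. d eps / norm_inf eps) ` {eps. \<exists>i. eps i \<noteq> 0}"
      unfolding S_def deg_eps_def val_eq by simp
    have "- (KP + KQ) \<le> d eps' / norm_inf eps'" if "eps' i \<noteq> 0" for eps' i
      using d_ge[of eps'] norm_inf_pos[of eps' i, OF that] by (simp add: le_divide_eq algebra_simps)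
    then have "bdd_below S" unfolding S_eq bdd_below_def by blast
    moreover have "d eps / norm_inf eps \<in> S" unfolding S_eq using True by blast
    ultimately have "Inf S \<le> d eps / norm_inf eps" by (rule cInf_lower[rotated])
    moreover have "rdeg r = - Inf S" unfolding rdeg_def S_def by simp
    moreover have "0 < norm_inf eps" using True norm_inf_pos by blast
    ultimately show ?thesis by (simp add: val_eq le_divide_eq)
  next
    case False
    then have "norm_inf eps = 0" using norm_inf_ge[of eps] norm_inf_nonneg[of eps] by (simp add: norm_inf_def)
    then show ?thesis using d_ge[of eps] by (simp add: val_eq)
  qed
qed

lemma min_weight_scale:
  assumes "0 \<le> e" "P \<noteq> 0"
  shows "min_weight (\<lambda>i. e * u i) P = e * min_weight u P"
proof -
  have "mono (\<lambda>x::real. e * x)" using assms(1) by (intro monoI mult_left_mono)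
  then show ?thesis
    unfolding min_weight_def dotp_scale using assms(2)
    by (subst mono_Min_commute[of "\<lambda>x. e * x"]) (auto simp: image_image)
qed

lemma min_weight_uminus: "min_weight eps (- P) = min_weight eps P"
  by (simp add: min_weight_def)

lemma in_R_rdeg_linear_bound:
  assumes "in_R f" "val f = ereal m"
  obtains C where "0 \<le> C" "\<And>t. f t \<noteq> 0 \<Longrightarrow> m < t \<Longrightarrow> rdeg (f t) \<le> C * (t - m)"
proof -
  define X where "X = (SUP t\<in>{t. f t \<noteq> 0 \<and> ereal t > val f}. ereal (rdeg (f t) / (t - m)))"
  have "X < \<infinity>" using assms unfolding in_R_def X_def by simp
  then obtain C where C: "X \<le> ereal C" "0 \<le> C"
  proof (cases X)
    case (real r)
    then show thesis using that[of "max r 0"] by simp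
  qed (use that[of 0] in auto)
  have "rdeg (f t) \<le> C * (t - m)" if "f t \<noteq> 0" "m < t" for t
  proof -
    have "ereal (rdeg (f t) / (t - m)) \<le> X"
      unfolding X_def using that assms(2) by (intro SUP_upper) auto
    then have "ereal (rdeg (f t) / (t - m)) \<le> ereal C" using C(1) by (rule order.trans)
    then have "rdeg (f t) / (t - m) \<le> C" by simp
    then show ?thesis using that by (simp add: divide_le_eq)
  qed
  with C(2) show thesis by (rule that)
qed

lemma val_pser_subst_leading_term:
  assumes vf: "val f = ereal m" and fm: "f m \<noteq> 0" and vm: "val (rat_subst eps (f m)) = ereal d"
    and dominated: "\<And>t x. f t \<noteq> 0 \<Longrightarrow> m < t \<Longrightarrow> rat_subst eps (f t) x \<noteq> 0 \<Longrightarrow> m + d < t + x"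
  shows "val (pser_subst eps f) = ereal (m + d)"
proof -
  let ?T = "\<lambda>s. {t. f t \<noteq> 0 \<and> rat_subst eps (f t) (s - t) \<noteq> 0}"
  have m_le: "m \<le> t" if "f t \<noteq> 0" for t
    using coeff_less_val[OF vf] that by (meson not_le)
  have d_le: "d \<le> x" if "rat_subst eps (f m) x \<noteq> 0" for x
    using coeff_less_val[OF vm] that by (meson not_le)
  have lead: "rat_subst eps (f m) d \<noteq> 0" by (rule coeff_val_nonzero[OF is_pser_rat_subst vm])
  have T_lead: "?T (m + d) = {m}"
  proof (intro equalityI subsetI)
    fix t assume "t \<in> ?T (m + d)"
    then have "f t \<noteq> 0" "rat_subst eps (f t) (m + d - t) \<noteq> 0" by auto
    then have "\<not> m < t" using dominated[of t "m + d - t"] by auto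
    with m_le[OF \<open>f t \<noteq> 0\<close>] show "t \<in> {m}" by simp
  qed (use fm lead in simp)
  have T_below: "?T s = {}" if "s < m + d" for s
  proof (intro equals0I)
    fix t assume "t \<in> ?T s"
    then have t: "f t \<noteq> 0" "rat_subst eps (f t) (s - t) \<noteq> 0" by auto
    show False
    proof (cases "m < t")
      case True
      then show False using dominated[OF t(1) True t(2)] that by simp
    next
      case False
      then have "t = m" using m_le[OF t(1)] by simp
      then show False using d_le[of "s - m"] t(2) that by simp
    qed
  qed
  show ?thesis
  proof (rule val_eqI)
    show "pser_subst eps f (m + d) \<noteq> 0"
      unfolding pser_subst_def T_lead using coeff_val_nonzero[OF is_pser_rat_subst vm] by simp
    show "pser_subst eps f s = 0" if "s < m + d" for s
      unfolding pser_subst_def T_below[OF that] by simp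
  qed
qed

lemma rat_subst_scaled_nonzero_ge:
  assumes "r \<noteq> 0" "0 \<le> e" "rat_subst (\<lambda>i. e * u i) r x \<noteq> 0"
  shows "- (rdeg r * (e * norm_inf u)) \<le> x"
  using order.trans[OF val_rat_subst_ge_rdeg[OF assms(1)] val_le[of "rat_subst (\<lambda>i. e * u i) r" x, OF assms(3)]]
  by (simp add: norm_inf_scale[OF assms(2)])

text \<open>For small e the higher terms of f are pushed up by at least half their gap to m, while the
  leading term moves by only e times its weight difference.\<close>

lemma eventually_val_pser_subst:
  assumes inR: "in_R f" and vf: "val f = ereal m" and fm: "f m = Fract P Q" and Q: "Q \<noteq> 0"
  shows "\<forall>\<^sub>F e in at_right 0. val (pser_subst (\<lambda>i. e * u i) f) = ereal (m + e * (min_weight u P - min_weight u Q))"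
proof -
  have f: "is_pser f" using inR unfolding in_R_def by blast
  have fm0: "f m \<noteq> 0" by (rule coeff_val_nonzero[OF f vf])
  then have P: "P \<noteq> 0" using fm by (auto simp: Zero_fract_def eq_fract)
  obtain C where C: "0 \<le> C" "\<And>t. f t \<noteq> 0 \<Longrightarrow> m < t \<Longrightarrow> rdeg (f t) \<le> C * (t - m)"
    using in_R_rdeg_linear_bound[OF inR vf] by blast
  obtain \<delta> where \<delta>: "0 < \<delta>" "\<And>t. f t \<noteq> 0 \<Longrightarrow> m < t \<Longrightarrow> m + \<delta> \<le> t"
    using pser_gap_above[OF f] by blast
  define D where "D = min_weight u P - min_weight u Q"
  define U where "U = norm_inf u"
  have lim: "((\<lambda>e::real. e * c) \<longlongrightarrow> 0) (at_right 0)" for c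
    by (rule tendsto_mult_left_zero[OF tendsto_ident_at])
  have "\<forall>\<^sub>F e in at_right 0. e * (C * U) < 1 / 2" by (rule order_tendstoD(2)[OF lim]) simp
  moreover have "\<forall>\<^sub>F e in at_right 0. e * D < \<delta> / 2" by (rule order_tendstoD(2)[OF lim]) (simp add: \<delta>(1))
  ultimately have "\<forall>\<^sub>F e in at_right 0. 0 < e \<and> e * (C * U) < 1 / 2 \<and> e * D < \<delta> / 2"
    using eventually_at_right_less[of "0::real"] by eventually_elim blast
  then show ?thesis
  proof (rule eventually_mono, elim conjE)
    fix e :: real assume e: "0 < e" and eCU: "e * (C * U) < 1 / 2" and eD: "e * D < \<delta> / 2"
    define eps where "eps = (\<lambda>i. e * u i)"
    have "val (rat_subst eps (f m)) = ereal (e * D)"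
      unfolding fm eps_def D_def val_rat_subst[OF Q P] using e P Q
      by (simp add: min_weight_scale right_diff_distrib)
    moreover have "m + e * D < t + x"
      if t: "f t \<noteq> 0" "m < t" and x: "rat_subst eps (f t) x \<noteq> 0" for t x
    proof -
      have "- (rdeg (f t) * (e * U)) \<le> x"
        using rat_subst_scaled_nonzero_ge[OF t(1) _ x[unfolded eps_def]] e unfolding U_def by simp
      moreover have "rdeg (f t) * (e * U) \<le> (C * (t - m)) * (e * U)"
        using C(2)[OF t] e norm_inf_nonneg[of u] unfolding U_def by (intro mult_right_mono) auto
      moreover have "(C * (t - m)) * (e * U) \<le> (t - m) / 2"
        using mult_right_mono[OF less_imp_le[OF eCU], of "t - m"] t(2) by (simp add: algebra_simps)
      ultimately show ?thesis using \<delta>(2)[OF t] eD by argo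
    qed
    ultimately have "val (pser_subst eps f) = ereal (m + e * D)"
      by (rule val_pser_subst_leading_term[OF vf fm0])
    then show "val (pser_subst (\<lambda>i. e * u i) f) = ereal (m + e * (min_weight u P - min_weight u Q))"
      unfolding eps_def D_def .
  qed
qed

lemma val_lc_add_no_cancellation:
  assumes "val f = ereal m" "val g = ereal m" "f m + g m \<noteq> 0"
  shows "val (\<lambda>t. f t + g t) = val f \<and> lc (\<lambda>t. f t + g t) = lc f + lc g"
proof -
  have "val (\<lambda>t. f t + g t) = ereal m"
    using assms coeff_less_val[OF assms(1)] coeff_less_val[OF assms(2)] by (intro val_eqI) auto
  then show ?thesis using assms(1,2) unfolding lc_def by simp
qed

theorem corollary2p4:
  fixes f g :: "'n::{finite,linorder} pser" and u :: "'n \<Rightarrow> real"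
  assumes "in_R f" and "in_R g"
    and "val f = val g"
    and "\<forall>\<^sub>F e in at_right (0::real).
           val (pser_subst (\<lambda>i. e * u i) f) < val (pser_subst (\<lambda>i. e * u i) g)"
  shows "val (\<lambda>t. f t + g t) = val f \<and> lc (\<lambda>t. f t + g t) = lc f + lc g"
proof (cases "\<forall>t. f t = 0")
  case True
  moreover from this have "\<forall>t. g t = 0" using assms(3) val_eq_top_iff by metis
  ultimately have "f = (\<lambda>t. 0)" "g = (\<lambda>t. 0)" by auto
  then show ?thesis unfolding lc_def by simp
next
  case False
  then obtain m where vf: "val f = ereal m"
    using val_pser_eq_ereal assms(1) unfolding in_R_def by blast
  with assms(3) have vg: "val g = ereal m" by simp
  obtain P Q where fm: "f m = Fract P Q" and Q: "Q \<noteq> 0" by (cases "f m") auto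
  have "f m + g m \<noteq> 0"
  proof
    assume "f m + g m = 0"
    then have "g m = - f m" by (simp add: add_eq_0_iff)
    with fm have gm: "g m = Fract (- P) Q" by simp
    have "\<forall>\<^sub>F e in at_right (0::real). False"
      using assms(4) eventually_val_pser_subst[OF assms(1) vf fm Q, of u]
        eventually_val_pser_subst[OF assms(2) vg gm Q, of u]
      by eventually_elim (simp add: min_weight_uminus)
    then show False by simp
  qed
  with vf vg show ?thesis by (rule val_lc_add_no_cancellation)
qed

end
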